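(* Let $m_1\le m_2\le\dots\le m_k$ be nonnegative integers, $n=\sum_r m_r$, and let $T_1,\dots,T_n\in\{H,L\}$ with $0\le H<L$. Let $q^{(t)}_r$ ($1\le r\le k$, $1\le t\le n+1$) be the capacity variables computed by Algorithm 1 on this input. Then for every $1\le t\le n$ and every $1\le r<s\le k$ we have $q^{(t)}_r\le q^{(t)}_s$.
   Context: Algorithm 1 (simulation-based threshold algorithm). Input: integers $0\le m_1\le\dots\le m_k$ and a sequence $T_1,\dots,T_n$ with $n=\sum_r m_r$. Set $q^{(1)}_r=m_r$ for all $r$. For $t=1,\dots,n$: set $x_t=\mathrm{TA}(q^{(t)}_1,\dots,q^{(t)}_k;\,T_t,T_{t+1},\dots,T_n)$ and $q^{(t+1)}_r=q^{(t)}_r-\mathbf{1}(x_t=r)$ for each $r$. Output $\mathbf{x}=(x_1,\dots,x_n)$. Subroutine $\mathrm{TA}(m_1,\dots,m_k;\,S_1,\dots,S_N)$ (ThresholdAllocation), with the convention $m_0:=0$: for $\gamma=k,k-1,\dots,1$: if $m_\gamma=m_{\gamma-1}$, go to the next $\gamma$; otherwise, for $h=\gamma,\gamma+1,\dots,k$: let $Z_L=\sum_{i=1}^{h-1}\min\{m_i,m_{\gamma-1}\}$ and $Z_H=\sum_{i=\gamma}^{h}(m_i-m_{\gamma-1})$; if $|\{i\in\{1,\dots,Z_L+Z_H\}: S_i>S_1\}|\ge Z_L$, return $\gamma$ (agent to which $S_1$ is assigned). *)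

theory Defs
  imports Complex_Main
begin

definition cap0 :: "(nat \<Rightarrow> int) \<Rightarrow> nat \<Rightarrow> int" where
  "cap0 m i = (if i = 0 then 0 else m i)"

definition TA_test :: "(nat \<Rightarrow> int) \<Rightarrow> (nat \<Rightarrow> real) \<Rightarrow> nat \<Rightarrow> nat \<Rightarrow> bool" where
  "TA_test m S \<gamma> h =
    (let ZL = (\<Sum>i\<in>{1..h-1}. min (cap0 m i) (cap0 m (\<gamma>-1)));
         ZH = (\<Sum>i\<in>{\<gamma>..h}. cap0 m i - cap0 m (\<gamma>-1))
     in int (card {i\<in>{1..nat (ZL + ZH)}. S i > S 1}) \<ge> ZL)"

definition TA_accepts :: "(nat \<Rightarrow> int) \<Rightarrow> nat \<Rightarrow> (nat \<Rightarrow> real) \<Rightarrow> nat \<Rightarrow> bool" where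
  "TA_accepts m k S \<gamma> = (cap0 m \<gamma> \<noteq> cap0 m (\<gamma>-1) \<and> (\<exists>h\<in>{\<gamma>..k}. TA_test m S \<gamma> h))"

text \<open>ThresholdAllocation: gamma runs downward from k, so the returned agent is the largest
  accepted gamma. If the loops end without returning (not specified in the paper) we return 0,
  which is not an agent, so no capacity changes.\<close>
definition TA :: "(nat \<Rightarrow> int) \<Rightarrow> nat \<Rightarrow> (nat \<Rightarrow> real) \<Rightarrow> nat" where
  "TA m k S = (if \<exists>\<gamma>\<in>{1..k}. TA_accepts m k S \<gamma>
               then Max {\<gamma>\<in>{1..k}. TA_accepts m k S \<gamma>} else 0)"

text \<open>alg_q m k T j = q^(j+1) of Algorithm 1; step j+1 uses S_i = T_(j+i).\<close>
fun alg_q :: "(nat \<Rightarrow> nat) \<Rightarrow> nat \<Rightarrow> (nat \<Rightarrow> real) \<Rightarrow> nat \<Rightarrow> nat \<Rightarrow> int" where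
  "alg_q m k T 0 = (\<lambda>r. int (m r))"
| "alg_q m k T (Suc j) =
     (let q = alg_q m k T j; x = TA q k (\<lambda>i. T (j + i))
      in (\<lambda>r. q r - (if x = r then 1 else 0)))"

definition capvar :: "(nat \<Rightarrow> nat) \<Rightarrow> nat \<Rightarrow> (nat \<Rightarrow> real) \<Rightarrow> nat \<Rightarrow> nat \<Rightarrow> int" where
  "capvar m k T t r = alg_q m k T (t - 1) r"

end

theory Submission
  imports Defs
begin

text \<open>The capacities stay sorted because ThresholdAllocation only ever returns an agent \<gamma> with
  m_\<gamma> \<noteq> m_(\<gamma>-1), i.e. a position where the sorted capacity vector strictly jumps
  (or \<gamma> = 1). Lowering a sorted vector by one at such a position keeps it sorted; the values
  of T play no role.\<close>

lemma mono_on_decrement_at_jump: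
  fixes q :: "nat \<Rightarrow> int"
  assumes mono: "mono_on {1..k} q"
    and jump: "\<And>r. r \<in> {1..k} \<Longrightarrow> r < x \<Longrightarrow> q r < q x"
  shows "mono_on {1..k} (\<lambda>r. q r - (if x = r then 1 else 0))"
proof (rule mono_onI)
  fix r s assume r: "r \<in> {1..k}" and s: "s \<in> {1..k}" and "r \<le> s"
  then have "q r \<le> q s" using mono by (simp add: mono_onD)
  moreover have "q r < q s" if "x = s" "x \<noteq> r"
    using jump[OF r] that \<open>r \<le> s\<close> by simp
  ultimately show "q r - (if x = r then 1 else 0) \<le> q s - (if x = s then 1 else 0)"
    by auto
qed

lemma TA_cases:
  "TA q k S = 0 \<or> (TA q k S \<in> {1..k} \<and> TA_accepts q k S (TA q k S))"
proof (cases "\<exists>\<gamma>\<in>{1..k}. TA_accepts q k S \<gamma>")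
  case True
  then have "Max {\<gamma>\<in>{1..k}. TA_accepts q k S \<gamma>} \<in> {\<gamma>\<in>{1..k}. TA_accepts q k S \<gamma>}"
    by (intro Max_in) auto
  then show ?thesis using True by (simp add: TA_def)
qed (simp add: TA_def)

lemma TA_at_jump:
  fixes q :: "nat \<Rightarrow> int"
  assumes mono: "mono_on {1..k} q" and r: "r \<in> {1..k}" and "r < TA q k S"
  shows "q r < q (TA q k S)"
proof -
  define x where "x = TA q k S"
  have x: "x \<in> {1..k}" "TA_accepts q k S x"
    using TA_cases[of q k S] \<open>r < TA q k S\<close> unfolding x_def by auto
  have "2 \<le> x" using r \<open>r < TA q k S\<close> x_def by simp
  then have "q (x - 1) \<noteq> q x"
    using x(2) by (simp add: TA_accepts_def cap0_def)
  moreover have "q r \<le> q (x - 1)" "q (x - 1) \<le> q x"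
    using r x(1) \<open>2 \<le> x\<close> \<open>r < TA q k S\<close> x_def by (auto intro!: mono_onD[OF mono])
  ultimately show ?thesis unfolding x_def by simp
qed

lemma mono_on_alg_q:
  assumes "mono_on {1..k} m"
  shows "mono_on {1..k} (alg_q m k T j)"
proof (induction j)
  case 0
  show ?case using assms by (auto simp: mono_on_def)
next
  case (Suc j)
  then show ?case
    using mono_on_decrement_at_jump[OF Suc TA_at_jump[OF Suc]] by (simp add: Let_def)
qed

theorem lemma3:
  fixes m :: "nat \<Rightarrow> nat" and k n :: nat and T :: "nat \<Rightarrow> real" and H L :: real
  assumes sorted: "\<And>r s. 1 \<le> r \<Longrightarrow> r \<le> s \<Longrightarrow> s \<le> k \<Longrightarrow> m r \<le> m s"
    and n_def: "n = (\<Sum>r\<in>{1..k}. m r)"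
    and HL: "0 \<le> H" "H < L"
    and T_vals: "\<And>t. 1 \<le> t \<Longrightarrow> t \<le> n \<Longrightarrow> T t = H \<or> T t = L"
    and t: "1 \<le> t" "t \<le> n"
    and rs: "1 \<le> r" "r < s" "s \<le> k"
  shows "capvar m k T t r \<le> capvar m k T t s"
proof -
  have "mono_on {1..k} m" by (rule mono_onI) (use sorted in auto)
  then have "mono_on {1..k} (alg_q m k T (t - 1))" by (rule mono_on_alg_q)
  then show ?thesis unfolding capvar_def using rs by (auto intro: mono_onD)
qed

end
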